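(* Let $\lambda=(n,k,k-1,\dots,1)$ with integers $n\ge k\ge 1$. (i) If $n-k$ is odd, then all roots of $\mathrm{He}_\lambda(x)$ are real, the non-zero roots are simple, and there are exactly $n-k-1$ non-zero roots. (ii) If $n-k$ is even, then all non-zero roots of $\mathrm{He}_\lambda(x)$ are simple; exactly $n-k$ of them are real and exactly $2k$ are non-real complex numbers.
   Context: $\mathrm{He}_j(x)$ denotes the monic probabilists' Hermite polynomial of degree $j$. For a partition $\lambda=(\lambda_1\ge\dots\ge\lambda_r\ge0)$ the degree sequence is $n_\lambda=(\lambda_r,\lambda_{r-1}+1,\dots,\lambda_1+r-1)$, $\Delta(x_1,\dots,x_r)=\prod_{i<j}(x_j-x_i)$, and $\mathrm{He}_\lambda(x)=\mathrm{Wr}[\mathrm{He}_{n_1},\dots,\mathrm{He}_{n_r}]/\Delta(n_\lambda)$ with $n_\lambda=(n_1,\dots,n_r)$; it is a monic polynomial of degree $|\lambda|$. *)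

theory Defs
  imports "HOL-Computational_Algebra.Polynomial" "HOL-Combinatorics.Permutations" Complex_Main
begin

fun hermite_He :: "nat \<Rightarrow> real poly" where
  "hermite_He 0 = 1"
| "hermite_He (Suc 0) = [:0, 1:]"
| "hermite_He (Suc (Suc j)) = [:0, 1:] * hermite_He (Suc j) - smult (real (Suc j)) (hermite_He j)"

definition det_fun :: "nat \<Rightarrow> (nat \<Rightarrow> nat \<Rightarrow> 'a::comm_ring_1) \<Rightarrow> 'a" where
  "det_fun r M = (\<Sum>p | p permutes {..<r}. of_int (sign p) * (\<Prod>i<r. M i (p i)))"

definition wronskian :: "real poly list \<Rightarrow> real poly" where
  "wronskian fs = det_fun (length fs) (\<lambda>i j. (pderiv ^^ i) (fs ! j))"

definition degree_seq :: "nat list \<Rightarrow> nat list" where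
  "degree_seq lam = map (\<lambda>j. lam ! (length lam - 1 - j) + j) [0..<length lam]"

definition vandermonde :: "nat list \<Rightarrow> real" where
  "vandermonde xs = (\<Prod>j<length xs. \<Prod>i<j. real (xs ! j) - real (xs ! i))"

definition hermite_partition :: "nat list \<Rightarrow> real poly" where
  "hermite_partition lam =
     smult (1 / vandermonde (degree_seq lam)) (wronskian (map hermite_He (degree_seq lam)))"

end

theory Submission
  imports Defs "Jordan_Normal_Form.Determinant" "HOL-Computational_Algebra.Fundamental_Theorem_Algebra"
begin

text \<open>
  Let \<open>N = n + k\<close>; the degree sequence of \<open>\<lambda>\<close> is \<open>(1, 3, \<dots>, 2k - 1, N)\<close>. Multiplying the
  Wronskian by \<open>x^(0 + 1 + \<dots> + k)\<close> turns row \<open>i\<close> into the falling factorial of degree \<open>i\<close> in the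
  Euler operator \<open>\<theta> = x d/dx\<close>, which acts diagonally on monomials. Row operations replace it by
  \<open>(\<theta> - 1)(\<theta> - 3)\<dots>(\<theta> - 2i + 1)\<close>, which kills \<open>He_1, He_3, \<dots>, He_(2i-1)\<close>; the matrix becomes
  triangular and \<open>He_\<lambda> = c x^e Q\<close> with \<open>Q = (\<theta> - 1)(\<theta> - 3)\<dots>(\<theta> - 2k + 1) He_N\<close>.

  Since \<open>\<theta> - c = x^(c+1) (d/dx) x^(-c)\<close>, by Rolle each factor loses at most one positive root, and
  \<open>He_N\<close> has \<open>\<lfloor>N/2\<rfloor>\<close> of them, so \<open>Q\<close> keeps at least \<open>\<lfloor>N/2\<rfloor> - k\<close>; as \<open>Q\<close> is even or odd, they
  come with their negatives. The coefficient recurrence of \<open>Q\<close> is the differential equation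
  \<open>x Q'' = (2k + x^2) Q' - N x Q\<close>, so the non-zero roots of \<open>Q\<close> are simple. For odd \<open>N\<close> the root
  \<open>0\<close> has multiplicity at least \<open>2k + 1\<close>, which leaves room for no other roots than the real ones
  already found. For even \<open>N\<close>, \<open>Q(0) \<noteq> 0\<close> and the even coefficients of \<open>Q\<close> change sign
  \<open>N/2 - k\<close> times, which bounds the number of positive roots from above.
\<close>

section \<open>Hermite polynomials\<close>

lemma X_mult_eq_pCons: "[:0, 1:] * (p :: 'a :: comm_ring_1 poly) = pCons 0 p"
  by (simp add: mult_pCons_left)

lemma pderiv_hermite_He: "pderiv (hermite_He (Suc n)) = Polynomial.smult (real (Suc n)) (hermite_He n)"
proof -
  have "pderiv (hermite_He (Suc n)) = Polynomial.smult (real (Suc n)) (hermite_He n) \<and>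
        pderiv (hermite_He (Suc (Suc n))) = Polynomial.smult (real (Suc (Suc n))) (hermite_He (Suc n))"
  proof (induction n)
    case 0
    show ?case by (simp add: pderiv_mult pderiv_pCons X_mult_eq_pCons numeral_2_eq_2)
  next
    case (Suc n)
    then have ih: "pderiv (hermite_He (Suc (Suc n))) = Polynomial.smult (real (Suc (Suc n))) (hermite_He (Suc n))"
      and ih': "pderiv (hermite_He (Suc n)) = Polynomial.smult (real (Suc n)) (hermite_He n)" by auto
    have "pderiv (hermite_He (Suc (Suc (Suc n)))) =
       hermite_He (Suc (Suc n)) + [:0,1:] * Polynomial.smult (real (Suc (Suc n))) (hermite_He (Suc n))
        - Polynomial.smult (real (Suc (Suc n))) (Polynomial.smult (real (Suc n)) (hermite_He n))"
      by (simp only: hermite_He.simps(3)[of "Suc n"] pderiv_diff pderiv_mult pderiv_smult ih ih')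
        (simp add: pderiv_pCons)
    also have "\<dots> = hermite_He (Suc (Suc n)) + Polynomial.smult (real (Suc (Suc n))) (hermite_He (Suc (Suc n)))"
      by (simp only: hermite_He.simps(3)[of n]) (simp add: algebra_simps smult_diff_right)
    also have "\<dots> = Polynomial.smult (real (Suc (Suc (Suc n)))) (hermite_He (Suc (Suc n)))"
      using smult_add_left[of 1 "real (Suc (Suc n))" "hermite_He (Suc (Suc n))"]
      by (simp del: hermite_He.simps)
    finally show ?case using ih by simp
  qed
  then show ?thesis ..
qed

lemma hermite_He_Suc: "hermite_He (Suc n) = [:0, 1:] * hermite_He n - pderiv (hermite_He n)"
  by (cases n) (simp_all add: pderiv_hermite_He)

lemma coeff_hermite_He:
  shows coeff_hermite_He_above: "n < m \<Longrightarrow> coeff (hermite_He n) m = 0"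
    and coeff_hermite_He_parity: "odd (n + m) \<Longrightarrow> coeff (hermite_He n) m = 0"
    and coeff_hermite_He_top: "coeff (hermite_He n) n = 1"
proof -
  have "(n < m \<longrightarrow> coeff (hermite_He n) m = 0) \<and> (odd (n + m) \<longrightarrow> coeff (hermite_He n) m = 0)
        \<and> coeff (hermite_He n) n = 1"
  proof (induction n arbitrary: m rule: hermite_He.induct)
    case 1 then show ?case by (auto simp add: coeff_1 odd_pos)
  next
    case 2 then show ?case by (cases m) (auto simp: coeff_pCons odd_pos split: nat.splits)
  next
    case (3 j)
    have c: "coeff (hermite_He (Suc (Suc j))) m' =
        (case m' of 0 \<Rightarrow> 0 | Suc t \<Rightarrow> coeff (hermite_He (Suc j)) t) - real (Suc j) * coeff (hermite_He j) m'" for m'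
      by (simp add: X_mult_eq_pCons coeff_pCons)
    show ?case
      using "3.IH"(1)[of "m - 1"] "3.IH"(2)[of m] "3.IH"(1)[of "Suc j"] "3.IH"(2)[of "Suc (Suc j)"]
      by (cases m) (auto simp: c)
  qed
  then show "n < m \<Longrightarrow> coeff (hermite_He n) m = 0" "odd (n + m) \<Longrightarrow> coeff (hermite_He n) m = 0"
    "coeff (hermite_He n) n = 1" by blast+
qed

lemma hermite_He_nonzero: "hermite_He n \<noteq> 0"
  using coeff_hermite_He_top[of n] by auto

lemma degree_hermite_He: "degree (hermite_He n) = n"
  by (intro antisym degree_le le_degree) (simp_all add: coeff_hermite_He_above coeff_hermite_He_top)

lemma lead_coeff_hermite_He: "lead_coeff (hermite_He n) = 1"
  by (simp add: degree_hermite_He coeff_hermite_He_top)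

lemma hermite_He_ode:
  "pderiv (pderiv (hermite_He n)) = [:0, 1:] * pderiv (hermite_He n) - Polynomial.smult (real n) (hermite_He n)"
proof -
  have "pderiv (hermite_He (Suc n)) =
      hermite_He n + [:0,1:] * pderiv (hermite_He n) - pderiv (pderiv (hermite_He n))"
    by (subst hermite_He_Suc) (simp add: pderiv_diff pderiv_mult pderiv_pCons)
  then show ?thesis by (simp add: pderiv_hermite_He algebra_simps smult_add_left)
qed

lemma coeff_hermite_He_rec:
  "real (m + 2) * real (m + 1) * coeff (hermite_He n) (m + 2) = (real m - real n) * coeff (hermite_He n) m"
proof -
  have "coeff (pderiv (pderiv (hermite_He n))) m =
      coeff ([:0,1:] * pderiv (hermite_He n) - Polynomial.smult (real n) (hermite_He n)) m"
    by (simp only: hermite_He_ode)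
  then show ?thesis by (cases m) (auto simp: coeff_pderiv X_mult_eq_pCons algebra_simps)
qed

lemma poly_hermite_He_0_eq_0_iff: "poly (hermite_He n) 0 = 0 \<longleftrightarrow> odd n"
proof
  assume "odd n"
  then show "poly (hermite_He n) 0 = 0" by (simp add: poly_0_coeff_0 coeff_hermite_He_parity)
next
  assume root: "poly (hermite_He n) 0 = 0"
  have "coeff (hermite_He n) (2 * s) = 0" for s
  proof (induction s)
    case (Suc s)
    have "real (2 * s + 2) * real (2 * s + 1) * coeff (hermite_He n) (2 * s + 2) = 0"
      using coeff_hermite_He_rec[of "2 * s" n] Suc.IH by simp
    then show ?case by simp
  qed (use root in \<open>simp add: poly_0_coeff_0\<close>)
  then show "odd n" using coeff_hermite_He_top[of n] by (metis evenE one_neq_zero)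
qed

section \<open>Real roots of Hermite polynomials\<close>

lemma ex_interlacing_points:
  fixes S :: "real set"
  assumes "finite S" "S \<noteq> {}"
    and "\<And>a b. a \<in> S \<Longrightarrow> b \<in> S \<Longrightarrow> a < b \<Longrightarrow> \<exists>t. a < t \<and> t < b \<and> P t"
  shows "\<exists>T. finite T \<and> card T = card S - 1 \<and> (\<forall>t\<in>T. P t \<and> Min S < t \<and> t < Max S)"
  using assms
proof (induction "card S" arbitrary: S)
  case 0
  then show ?case by simp
next
  case (Suc n S)
  show ?case
  proof (cases n)
    case 0
    then show ?thesis using Suc by (intro exI[of _ "{}"]) auto
  next
    case (Suc n')
    define S' where "S' = S - {Max S}"
    have MS: "Max S \<in> S" using Suc.prems by simp
    have cS': "card S' = n" unfolding S'_def using Suc.hyps(2) Suc.prems MS by simp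
    have S': "finite S'" "S' \<noteq> {}" "S' \<subseteq> S"
      using Suc.prems cS' \<open>n = Suc n'\<close> by (auto simp: S'_def[symmetric]) (auto simp: S'_def)
    obtain T' where T': "finite T'" "card T' = card S' - 1" "\<forall>t\<in>T'. P t \<and> Min S' < t \<and> t < Max S'"
      using Suc.hyps(1)[OF cS'[symmetric] S'(1,2)] Suc.prems(3) S'(3) by blast
    have a: "Max S' \<in> S" using S' Max_in by blast
    have "Max S' \<noteq> Max S" using S' unfolding S'_def by (metis Max_in Diff_iff insertI1)
    then have ab: "Max S' < Max S" using a Suc.prems by (simp add: order_neq_le_trans)
    obtain t where t: "Max S' < t" "t < Max S" "P t" using Suc.prems(3)[OF a MS ab] by blast
    have Min: "Min S \<le> Min S'" "Min S' \<le> Max S'" using S' Suc.prems by (auto intro: Min_antimono)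
    have "t \<notin> T'" using T'(3) t by fastforce
    show ?thesis
    proof (intro exI[of _ "insert t T'"] conjI)
      show "card (insert t T') = card S - 1" using T' \<open>t \<notin> T'\<close> cS' Suc.hyps(2) \<open>n = Suc n'\<close> by simp
      show "\<forall>x\<in>insert t T'. P x \<and> Min S < x \<and> x < Max S" using T'(3) t Min ab by fastforce
    qed (use T' in simp)
  qed
qed

lemma ex_root_above_if_neg:
  fixes p :: "real poly"
  assumes "lead_coeff p > 0" "poly p a < 0"
  shows "\<exists>t>a. poly p t = 0"
proof -
  obtain B where B: "\<forall>x\<ge>B. poly p x \<ge> lead_coeff p" using poly_pinfty_gt_lc[OF assms(1)] by blast
  define b where "b = max B (a + 1)"
  have "poly p b \<ge> lead_coeff p" "a < b" using B by (auto simp: b_def)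
  then have "poly p b > 0" "a < b" using assms(1) by auto
  then show ?thesis using poly_IVT_pos[of a b p] assms(2) by force
qed

text \<open>Rolle's theorem for \<open>He_n(x) exp(-x^2/2)\<close>, whose derivative is \<open>-He_(n+1)(x) exp(-x^2/2)\<close>.\<close>
lemma hermite_He_Suc_root_between:
  assumes "a < b" "poly (hermite_He n) a = 0" "poly (hermite_He n) b = 0"
  shows "\<exists>t. a < t \<and> t < b \<and> poly (hermite_He (Suc n)) t = 0"
proof -
  define G where "G = (\<lambda>x. poly (hermite_He n) x * exp (- (x\<^sup>2) / 2))"
  have der: "DERIV G x :> (- poly (hermite_He (Suc n)) x) * exp (- (x\<^sup>2) / 2)" for x
    unfolding G_def hermite_He_Suc[of n] by (auto intro!: derivative_eq_intros simp: algebra_simps)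
  have "G a = G b" using assms unfolding G_def by simp
  moreover have "continuous_on {a..b} G" unfolding G_def by (intro continuous_intros) auto
  moreover have "G differentiable (at x)" for x
    using der[of x] unfolding differentiable_def has_field_derivative_def by blast
  ultimately obtain z where z: "a < z" "z < b" "DERIV G z :> 0" using Rolle[OF assms(1)] by blast
  then have "(- poly (hermite_He (Suc n)) z) * exp (- (z\<^sup>2) / 2) = 0"
    using DERIV_unique[OF der] by blast
  then show ?thesis using z by auto
qed

lemma hermite_He_Suc_root_above:
  assumes "poly (hermite_He n) x\<^sub>0 = 0"
  shows "\<exists>t. (\<forall>x. poly (hermite_He n) x = 0 \<longrightarrow> x \<le> t) \<and> poly (hermite_He (Suc n)) t = 0"
proof -
  define f where "f = hermite_He n"
  define R where "R = {x. poly f x = 0}"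
  have fin: "finite R" unfolding R_def f_def by (rule poly_roots_finite) (rule hermite_He_nonzero)
  have "R \<noteq> {}" using assms unfolding R_def f_def by blast
  define L where "L = Max R"
  have L: "poly f L = 0" using Max_in[OF fin \<open>R \<noteq> {}\<close>] unfolding L_def R_def by simp
  have L_max: "x \<le> L" if "poly f x = 0" for x unfolding L_def using fin that R_def by simp
  have pos: "poly f y > 0" if "y > L" for y
  proof (rule ccontr)
    assume "\<not> poly f y > 0"
    moreover have "poly f y \<noteq> 0" using L_max that by force
    ultimately have "poly f y < 0" by simp
    then obtain t where "t > y" "poly f t = 0"
      using ex_root_above_if_neg[of f y] by (auto simp: f_def lead_coeff_hermite_He)
    then show False using L_max[of t] that by simp
  qed
  have "poly (pderiv f) L \<ge> 0"
  proof (rule ccontr)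
    assume "\<not> poly (pderiv f) L \<ge> 0"
    then obtain d where "d > 0" "\<forall>h>0. h < d \<longrightarrow> poly f L > poly f (L + h)"
      using DERIV_neg_dec_right[OF poly_DERIV[of f L]] by auto
    then have "poly f (L + d / 2) < 0" using L by simp
    then show False using pos[of "L + d / 2"] \<open>d > 0\<close> by simp
  qed
  then have "poly (hermite_He (Suc n)) L \<le> 0" using L unfolding hermite_He_Suc f_def by simp
  then obtain t where "t \<ge> L" "poly (hermite_He (Suc n)) t = 0"
  proof (cases "poly (hermite_He (Suc n)) L = 0")
    case False
    then obtain t where "t > L" "poly (hermite_He (Suc n)) t = 0"
      using ex_root_above_if_neg[of "hermite_He (Suc n)" L] \<open>poly (hermite_He (Suc n)) L \<le> 0\<close>
      by (auto simp: lead_coeff_hermite_He)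
    then show ?thesis using that[of t] by simp
  qed (use that in blast)
  then show ?thesis using L_max by (intro exI[of _ t]) (auto simp: f_def intro: order_trans)
qed

text \<open>Rolle places a root of \<open>He_(n+1)\<close> between consecutive non-negative roots of \<open>He_n\<close>, and one
  more lies beyond the largest root.\<close>
lemma card_pos_roots_hermite_He: "n div 2 \<le> card {x. 0 < x \<and> poly (hermite_He n) x = 0}"
proof (induction n)
  case 0 then show ?case by simp
next
  case (Suc N)
  define S where "S = {x. 0 < x \<and> poly (hermite_He N) x = 0}"
  define S0 where "S0 = S \<union> (if odd N then {0} else {})"
  define G where "G = {x. 0 < x \<and> poly (hermite_He (Suc N)) x = 0}"
  have fS: "finite S" unfolding S_def
    using poly_roots_finite[OF hermite_He_nonzero[of N]] by (rule rev_finite_subset) auto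
  have fG: "finite G" unfolding G_def
    using poly_roots_finite[OF hermite_He_nonzero[of "Suc N"]] by (rule rev_finite_subset) auto
  have fS0: "finite S0" unfolding S0_def using fS by simp
  have S0_root: "poly (hermite_He N) x = 0 \<and> 0 \<le> x" if "x \<in> S0" for x
    using that poly_hermite_He_0_eq_0_iff[of N] unfolding S0_def S_def by (auto split: if_splits)
  have card_S0: "card S0 = card S + (if odd N then 1 else 0)"
    unfolding S0_def using fS by (auto simp: S_def)
  have IH: "N div 2 \<le> card S" using Suc.IH unfolding S_def .
  show ?case
  proof (cases "S0 = {}")
    case True
    then have "card S = 0" "even N" unfolding S0_def by (auto split: if_splits)
    then show ?thesis using IH by presburger
  next
    case False
    obtain T where T: "finite T" "card T = card S0 - 1"
        "\<forall>t\<in>T. poly (hermite_He (Suc N)) t = 0 \<and> Min S0 < t \<and> t < Max S0"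
      using ex_interlacing_points[OF fS0 False, of "\<lambda>t. poly (hermite_He (Suc N)) t = 0"]
        hermite_He_Suc_root_between S0_root by blast
    have MinS0: "0 \<le> Min S0" using Min_in[OF fS0 False] S0_root by blast
    have MaxS0: "Max S0 \<in> S0" using Max_in[OF fS0 False] .
    obtain t' where t': "\<forall>x. poly (hermite_He N) x = 0 \<longrightarrow> x \<le> t'" "poly (hermite_He (Suc N)) t' = 0"
      using hermite_He_Suc_root_above S0_root[OF MaxS0] by blast
    have t'_ge: "Max S0 \<le> t'" using t'(1) S0_root[OF MaxS0] by blast
    have t'_pos: "0 < t'"
    proof (rule ccontr)
      assume "\<not> 0 < t'"
      then have "t' = 0" "Max S0 = 0" using t'_ge S0_root[OF MaxS0] by linarith+
      have "S = {}"
      proof (rule ccontr)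
        assume "S \<noteq> {}"
        then obtain x where "x \<in> S" by blast
        then have "0 < x" "x \<le> Max S0" using Max_ge[OF fS0, of x] by (auto simp: S_def S0_def)
        then show False using \<open>Max S0 = 0\<close> by simp
      qed
      then have "odd N" using False unfolding S0_def by (auto split: if_splits)
      then show False using t'(2) \<open>t' = 0\<close> poly_hermite_He_0_eq_0_iff[of "Suc N"] by simp
    qed
    have "insert t' T \<subseteq> G" unfolding G_def using T(3) MinS0 t'_pos t'(2) by force
    moreover have "t' \<notin> T" using T(3) t'_ge by force
    then have "card (insert t' T) = card S0"
      using T False fS0 by (simp add: card_gt_0_iff Suc_diff_1 del: card_0_eq)
    ultimately have "card S0 \<le> card G" using card_mono[OF fG] by (metis (no_types))
    then show ?thesis using IH card_S0 unfolding G_def by presburger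
  qed
qed

section \<open>The Euler operator\<close>

text \<open>\<open>euler_apply p g = p(\<theta>) g\<close> for \<open>\<theta> = x d/dx\<close>, which multiplies \<open>x^m\<close> by \<open>m\<close>; and
  \<open>euler_shift c f = (\<theta> - c) f\<close>.\<close>
definition euler_apply :: "real poly \<Rightarrow> real poly \<Rightarrow> real poly" where
  "euler_apply p g = Poly (map (\<lambda>m. poly p (real m) * coeff g m) [0..<Suc (degree g)])"

lemma coeff_euler_apply: "coeff (euler_apply p g) m = poly p (real m) * coeff g m"
  by (cases "m \<le> degree g") (simp_all add: euler_apply_def nth_default_def coeff_eq_0 del: upt_Suc)

definition euler_shift :: "nat \<Rightarrow> real poly \<Rightarrow> real poly" where
  "euler_shift c f = [:0, 1:] * pderiv f - Polynomial.smult (real c) f"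

lemma poly_euler_shift: "poly (euler_shift c f) x = x * poly (pderiv f) x - real c * poly f x"
  by (simp add: euler_shift_def)

lemma coeff_euler_shift: "coeff (euler_shift c f) m = (real m - real c) * coeff f m"
  by (cases m) (auto simp: euler_shift_def coeff_pderiv coeff_pCons mult_pCons_left algebra_simps)

lemma euler_apply_1: "euler_apply 1 g = g"
  by (rule poly_eqI) (simp add: coeff_euler_apply)

lemma euler_apply_linear_factor:
  "euler_apply ([:- real c, 1:] * p) g = euler_shift c (euler_apply p g)"
  by (rule poly_eqI) (simp add: coeff_euler_apply coeff_euler_shift algebra_simps)

lemma euler_apply_as_sum:
  assumes "degree p < r"
  shows "euler_apply p g = (\<Sum>l<r. [:coeff p l:] * euler_apply (monom 1 l) g)"
proof (rule poly_eqI)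
  fix m
  have "poly p (real m) = (\<Sum>l<r. coeff p l * real m ^ l)"
    unfolding poly_altdef using assms
    by (intro sum.mono_neutral_left) (auto simp: coeff_eq_0)
  then show "coeff (euler_apply p g) m = coeff (\<Sum>l<r. [:coeff p l:] * euler_apply (monom 1 l) g) m"
    by (simp add: coeff_sum coeff_euler_apply poly_monom sum_distrib_right mult.assoc)
qed

text \<open>On \<open>x > 0\<close>, \<open>euler_shift c f = x^(c+1) (f / x^c)'\<close>, so Rolle applies to \<open>f / x^c\<close>.\<close>
lemma euler_shift_root_between:
  assumes "0 < a" "a < b" "poly f a = 0" "poly f b = 0"
  shows "\<exists>t. a < t \<and> t < b \<and> poly (euler_shift c f) t = 0"
proof -
  define h where "h = (\<lambda>x. poly f x / x ^ c)"
  have der: "DERIV h x :> poly (euler_shift c f) x / x ^ Suc c" if "0 < x" for x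
  proof -
    have "DERIV h x :> (poly (pderiv f) x * x ^ c - poly f x * (real c * x ^ (c - 1))) / (x ^ c * x ^ c)"
      unfolding h_def using that by (auto intro!: derivative_eq_intros)
    moreover have "(poly (pderiv f) x * x ^ c - poly f x * (real c * x ^ (c - 1))) / (x ^ c * x ^ c) =
        poly (euler_shift c f) x / x ^ Suc c"
      using that by (cases c) (simp_all add: poly_euler_shift field_simps)
    ultimately show ?thesis by simp
  qed
  have "h a = h b" using assms unfolding h_def by simp
  moreover have "continuous_on {a..b} h" unfolding h_def using assms(1) by (intro continuous_intros) auto
  moreover have "h differentiable (at x)" if "a < x" "x < b" for x
    using der[of x] that assms(1) unfolding differentiable_def has_field_derivative_def by auto
  ultimately obtain z where z: "a < z" "z < b" "DERIV h z :> 0" using Rolle[OF assms(2)] by blast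
  moreover have "DERIV h z :> poly (euler_shift c f) z / z ^ Suc c" using der z(1) assms(1) by simp
  ultimately have "poly (euler_shift c f) z / z ^ Suc c = 0" using DERIV_unique by blast
  then show ?thesis using z assms(1) by auto
qed

lemma card_pos_roots_le_euler_shift:
  assumes "f \<noteq> 0" "euler_shift c f \<noteq> 0"
  shows "card {x. 0 < x \<and> poly f x = 0} \<le> Suc (card {x. 0 < x \<and> poly (euler_shift c f) x = 0})"
proof (cases "{x. 0 < x \<and> poly f x = 0} = {}")
  case True
  then show ?thesis by (simp only: True card.empty)
next
  case False
  define S where "S = {x. 0 < x \<and> poly f x = 0}"
  define G where "G = {x. 0 < x \<and> poly (euler_shift c f) x = 0}"
  have fS: "finite S" unfolding S_def using poly_roots_finite[OF assms(1)] by (rule rev_finite_subset) auto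
  have fG: "finite G" unfolding G_def using poly_roots_finite[OF assms(2)] by (rule rev_finite_subset) auto
  obtain T where T: "card T = card S - 1" "\<forall>t\<in>T. poly (euler_shift c f) t = 0 \<and> Min S < t \<and> t < Max S"
    using ex_interlacing_points[OF fS False[folded S_def], of "\<lambda>t. poly (euler_shift c f) t = 0"]
      euler_shift_root_between unfolding S_def by blast
  have "0 < Min S" using Min_in[OF fS False[folded S_def]] unfolding S_def by simp
  then have "T \<subseteq> G" using T(2) unfolding G_def by force
  then have "card T \<le> card G" using fG by (rule card_mono[rotated])
  then show ?thesis using T(1) unfolding S_def G_def by linarith
qed

definition roots_poly :: "(nat \<Rightarrow> real) \<Rightarrow> nat \<Rightarrow> real poly" where
  "roots_poly a i = (\<Prod>s<i. [:- a s, 1:])"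

lemma poly_roots_poly: "poly (roots_poly a i) x = (\<Prod>s<i. x - a s)"
  by (simp add: roots_poly_def poly_prod)

lemma roots_poly_Suc: "roots_poly a (Suc i) = [:- a i, 1:] * roots_poly a i"
  by (simp add: roots_poly_def)

lemma degree_roots_poly: "degree (roots_poly a i) = i"
  and coeff_roots_poly_top: "coeff (roots_poly a i) i = 1"
proof -
  have "lead_coeff (roots_poly a i) = 1" by (simp add: roots_poly_def lead_coeff_prod)
  moreover show d: "degree (roots_poly a i) = i"
    unfolding roots_poly_def by (subst degree_prod_eq_sum_degree) auto
  ultimately show "coeff (roots_poly a i) i = 1" by simp
qed

lemma pochhammer_eq_falling_product:
  "pochhammer (real m - real i + 1) i = (\<Prod>s<i. real m - real s)"
proof (induction i)
  case (Suc i)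
  have "pochhammer (real m - real (Suc i) + 1) (Suc i) = (real m - real i) * pochhammer (real m - real i + 1) i"
    by (simp add: pochhammer_rec)
  then show ?case using Suc by (simp add: mult.commute)
qed simp

lemma monom_mult_higher_pderiv: "monom 1 i * (pderiv ^^ i) g = euler_apply (roots_poly real i) g"
proof (rule poly_eqI)
  fix m
  show "coeff (monom 1 i * (pderiv ^^ i) g) m = coeff (euler_apply (roots_poly real i) g) m"
  proof (cases "m < i")
    case True
    then have "poly (roots_poly real i) (real m) = 0" by (auto simp: poly_roots_poly prod_zero_iff)
    then show ?thesis using True by (simp add: coeff_monom_mult coeff_euler_apply)
  next
    case False
    then show ?thesis
      using pochhammer_eq_falling_product[of m i]
      by (simp add: coeff_monom_mult coeff_euler_apply coeff_higher_pderiv poly_roots_poly of_nat_diff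
          algebra_simps)
  qed
qed

section \<open>Wronskians as determinants of Euler operators\<close>

definition euler_matrix :: "nat \<Rightarrow> (nat \<Rightarrow> real poly) \<Rightarrow> (nat \<Rightarrow> real poly) \<Rightarrow> real poly mat" where
  "euler_matrix r p g = mat r r (\<lambda>(i, j). euler_apply (p i) (g j))"

text \<open>The passage from monomials to \<open>p\<close> is multiplication by a unitriangular matrix of coefficients.\<close>
lemma det_euler_matrix_monic:
  assumes "\<And>i. i < r \<Longrightarrow> degree (p i) \<le> i \<and> coeff (p i) i = 1"
  shows "det (euler_matrix r p g) = det (euler_matrix r (\<lambda>i. monom 1 i) g)"
proof -
  define L where "L = mat r r (\<lambda>(i, l). [:coeff (p i) l:])"
  have L: "L \<in> carrier_mat r r" unfolding L_def by simp
  have eq: "euler_matrix r p g = L * euler_matrix r (\<lambda>i. monom 1 i) g"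
  proof (rule eq_matI)
    fix i j assume "i < dim_row (L * euler_matrix r (\<lambda>i. monom 1 i) g)"
      "j < dim_col (L * euler_matrix r (\<lambda>i. monom 1 i) g)"
    then have i: "i < r" and j: "j < r" by (auto simp: L_def euler_matrix_def)
    have "degree (p i) < r" using assms[OF i] i by linarith
    then show "euler_matrix r p g $$ (i, j) = (L * euler_matrix r (\<lambda>i. monom 1 i) g) $$ (i, j)"
      using i j by (simp add: euler_matrix_def L_def scalar_prod_def euler_apply_as_sum lessThan_atLeast0)
  qed (auto simp: L_def euler_matrix_def)
  have "det L = prod_list (diag_mat L)"
  proof (rule det_lower_triangular[OF _ L])
    fix i j assume "i < j" "j < r"
    then have "degree (p i) < j" using assms[of i] by linarith
    then show "L $$ (i, j) = 0" using \<open>j < r\<close> \<open>i < j\<close> by (simp add: L_def coeff_eq_0)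
  qed
  also have "diag_mat L = map (\<lambda>_. 1) [0..<r]"
    unfolding diag_mat_def L_def using assms by (auto simp: one_pCons)
  finally have "det L = 1" by (simp add: map_replicate_const)
  then show ?thesis unfolding eq by (subst det_mult[OF L]) (auto simp: euler_matrix_def)
qed

text \<open>Laplace expansion along the last row, after replacing it by a monic \<open>q\<close> that kills the other columns.\<close>
lemma det_euler_matrix_Suc:
  assumes "degree q = r" "coeff q r = 1" "\<And>j. j < r \<Longrightarrow> euler_apply q (g j) = 0"
  shows "det (euler_matrix (Suc r) (\<lambda>i. monom 1 i) g) = euler_apply q (g r) * det (euler_matrix r (\<lambda>i. monom 1 i) g)"
proof -
  define A where "A = euler_matrix (Suc r) (\<lambda>i. if i = r then q else monom 1 i) g"
  have A: "A \<in> carrier_mat (Suc r) (Suc r)" unfolding A_def euler_matrix_def by simp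
  have "det (euler_matrix (Suc r) (\<lambda>i. monom 1 i) g) = det A"
    unfolding A_def by (rule det_euler_matrix_monic[symmetric]) (auto simp: degree_monom_eq assms)
  also have "\<dots> = (\<Sum>j<Suc r. A $$ (r, j) * cofactor A r j)"
    by (rule laplace_expansion_row[OF A]) simp
  also have "\<dots> = A $$ (r, r) * cofactor A r r"
    using assms(3) by (simp add: A_def euler_matrix_def)
  also have "mat_delete A r r = euler_matrix r (\<lambda>i. monom 1 i) g"
    by (rule eq_matI) (auto simp: mat_delete_def A_def euler_matrix_def)
  then have "cofactor A r r = det (euler_matrix r (\<lambda>i. monom 1 i) g)"
    unfolding cofactor_def by simp
  finally show ?thesis by (simp add: A_def euler_matrix_def)
qed

lemma det_fun_cong:
  assumes "\<And>i j. i < r \<Longrightarrow> j < r \<Longrightarrow> M i j = M' i j"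
  shows "det_fun r M = det_fun r M'"
  unfolding det_fun_def
proof (intro sum.cong refl arg_cong2[where f = "(*)"] prod.cong)
  fix p i assume "p \<in> {p. p permutes {..<r}}" "i \<in> {..<r}"
  then show "M i (p i) = M' i (p i)" using assms permutes_in_image by fastforce
qed

lemma det_fun_eq_det: "det_fun r M = det (mat r r (\<lambda>(i, j). M i j))"
proof -
  have "det (mat r r (\<lambda>(i, j). M i j)) =
      (\<Sum>p | p permutes {0..<r}. of_int (sign p) * (\<Prod>i = 0..<r. mat r r (\<lambda>(i, j). M i j) $$ (i, p i)))"
    by (rule det_def') simp
  also have "\<dots> = (\<Sum>p | p permutes {0..<r}. of_int (sign p) * (\<Prod>i = 0..<r. M i (p i)))"
  proof (intro sum.cong refl arg_cong2[where f = "(*)"] prod.cong)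
    fix p i assume "p \<in> {p. p permutes {0..<r}}" "i \<in> {0..<r}"
    then show "mat r r (\<lambda>(i, j). M i j) $$ (i, p i) = M i (p i)" using permutes_in_image by fastforce
  qed
  finally show ?thesis unfolding det_fun_def by (simp add: lessThan_atLeast0)
qed

lemma monom_mult_wronskian_det:
  "(\<Prod>i<r. monom 1 i) * det_fun r (\<lambda>i j. (pderiv ^^ i) (g j)) = det (euler_matrix r (\<lambda>i. monom 1 i) g)"
proof -
  have "det (euler_matrix r (\<lambda>i. monom 1 i) g) = det (euler_matrix r (roots_poly real) g)"
    by (rule det_euler_matrix_monic[symmetric]) (simp add: degree_roots_poly coeff_roots_poly_top)
  also have "euler_matrix r (roots_poly real) g = mat r r (\<lambda>(i, j). monom 1 i * (pderiv ^^ i) (g j))"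
    unfolding euler_matrix_def by (simp add: monom_mult_higher_pderiv)
  also have "det \<dots> = det_fun r (\<lambda>i j. monom 1 i * (pderiv ^^ i) (g j))"
    by (simp add: det_fun_eq_det)
  also have "\<dots> = (\<Prod>i<r. monom 1 i) * det_fun r (\<lambda>i j. (pderiv ^^ i) (g j))"
    unfolding det_fun_def sum_distrib_left prod.distrib by (simp only: mult.left_commute)
  finally show ?thesis by simp
qed

section \<open>Staircase partitions\<close>

abbreviation odd_annihilator :: "nat \<Rightarrow> real poly" where
  "odd_annihilator \<equiv> roots_poly (\<lambda>t. real (2 * t + 1))"

lemma euler_apply_odd_annihilator_hermite_He:
  assumes "j \<le> s"
  shows "euler_apply (odd_annihilator s) (hermite_He (2 * j + 1)) =
    (if j = s then monom (poly (odd_annihilator s) (real (2 * s + 1))) (2 * s + 1) else 0)"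
proof (rule poly_eqI)
  fix m
  show "coeff (euler_apply (odd_annihilator s) (hermite_He (2 * j + 1))) m =
    coeff (if j = s then monom (poly (odd_annihilator s) (real (2 * s + 1))) (2 * s + 1) else 0) m"
  proof (cases "coeff (hermite_He (2 * j + 1)) m = 0")
    case True
    then show ?thesis using coeff_hermite_He_top[of "2 * s + 1"] by (auto simp: coeff_euler_apply coeff_monom)
  next
    case False
    have "m \<le> 2 * j + 1" using coeff_hermite_He_above[of "2 * j + 1" m] False by (meson not_le)
    moreover have "even (2 * j + 1 + m)" using coeff_hermite_He_parity[of "2 * j + 1" m] False by blast
    ultimately obtain t where t: "m = 2 * t + 1" "t \<le> j"
      by (intro that[of "m div 2"]) presburger+
    show ?thesis
    proof (cases "t = s")
      case True
      then show ?thesis using t assms coeff_hermite_He_top[of "2 * s + 1"] by (simp add: coeff_euler_apply)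
    next
      case False
      then have "poly (odd_annihilator s) (real m) = 0"
        using t assms by (auto simp: poly_roots_poly prod_zero_iff)
      then show ?thesis using t False by (auto simp: coeff_euler_apply coeff_monom)
    qed
  qed
qed

lemma det_euler_matrix_odd_hermite:
  assumes "\<And>j. j < r \<Longrightarrow> g j = hermite_He (2 * j + 1)"
  shows "det (euler_matrix r (\<lambda>i. monom 1 i) g) =
    (\<Prod>t<r. monom (poly (odd_annihilator t) (real (2 * t + 1))) (2 * t + 1))"
  using assms
proof (induction r)
  case 0
  then show ?case by (simp add: euler_matrix_def)
next
  case (Suc r)
  have "euler_apply (odd_annihilator r) (g j) = 0" if "j < r" for j
    using euler_apply_odd_annihilator_hermite_He[of j r] Suc.prems[of j] that by simp
  then have "det (euler_matrix (Suc r) (\<lambda>i. monom 1 i) g) =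
      euler_apply (odd_annihilator r) (g r) * det (euler_matrix r (\<lambda>i. monom 1 i) g)"
    by (intro det_euler_matrix_Suc) (simp_all add: degree_roots_poly coeff_roots_poly_top)
  also have "euler_apply (odd_annihilator r) (g r) = monom (poly (odd_annihilator r) (real (2 * r + 1))) (2 * r + 1)"
    using euler_apply_odd_annihilator_hermite_He[of r r] Suc.prems[of r] by simp
  finally show ?case using Suc by (simp add: mult.commute)
qed

lemma prod_monom: "finite A \<Longrightarrow> (\<Prod>i\<in>A. monom (a i) (b i)) = monom (\<Prod>i\<in>A. a i) (\<Sum>i\<in>A. b i)"
  by (induction A rule: finite_induct) (auto simp: mult_monom)

lemma degree_seq_staircase:
  "degree_seq (n # rev [1..<k + 1]) = map (\<lambda>j. if j < k then 2 * j + 1 else n + k) [0..<Suc k]"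
proof (rule nth_equalityI)
  fix j assume "j < length (degree_seq (n # rev [1..<k + 1]))"
  then have j: "j < Suc k" by (simp add: degree_seq_def del: upt_Suc)
  show "degree_seq (n # rev [1..<k + 1]) ! j = map (\<lambda>j. if j < k then 2 * j + 1 else n + k) [0..<Suc k] ! j"
  proof (cases "j < k")
    case True
    then have "(n # rev [1..<k + 1]) ! (k - j) = j + 1"
      by (simp add: nth_Cons' rev_nth del: upt_Suc)
    then show ?thesis using True j by (simp add: degree_seq_def nth_append del: upt_Suc)
  next
    case False
    then show ?thesis using j by (simp add: degree_seq_def nth_append del: upt_Suc)
  qed
qed (simp add: degree_seq_def)

lemma vandermonde_nonzero:
  assumes "\<And>i j. i < j \<Longrightarrow> j < length xs \<Longrightarrow> xs ! i < xs ! j"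
  shows "vandermonde xs \<noteq> 0"
  unfolding vandermonde_def by (auto simp: prod_zero_iff) (metis assms less_irrefl)

text \<open>\<open>(\<theta> - 1)(\<theta> - 3)\<dots>(\<theta> - 2k + 1) He_N\<close>; for \<open>N = n + k\<close> it is \<open>He_\<lambda>\<close> up to a monomial factor.\<close>
definition reduced_hermite :: "nat \<Rightarrow> nat \<Rightarrow> real poly" where
  "reduced_hermite k N = euler_apply (odd_annihilator k) (hermite_He N)"

lemma hermite_partition_staircase:
  assumes "k \<le> n"
  obtains c e where "c \<noteq> 0" "hermite_partition (n # rev [1..<k + 1]) = monom c e * reduced_hermite k (n + k)"
proof -
  define ds where "ds = degree_seq (n # rev [1..<k + 1])"
  have ds: "ds = map (\<lambda>j. if j < k then 2 * j + 1 else n + k) [0..<Suc k]"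
    unfolding ds_def by (rule degree_seq_staircase)
  define g where "g = (\<lambda>j. hermite_He (ds ! j))"
  have g_odd: "g j = hermite_He (2 * j + 1)" if "j < k" for j
    using that by (simp add: g_def ds nth_append del: upt_Suc)
  have g_top: "g k = hermite_He (n + k)" by (simp add: g_def ds nth_append del: upt_Suc)
  define W where "W = wronskian (map hermite_He ds)"
  have W: "W = det_fun (Suc k) (\<lambda>i j. (pderiv ^^ i) (g j))"
  proof -
    have len: "length (map hermite_He ds) = Suc k" by (simp add: ds)
    show ?thesis unfolding W_def wronskian_def len g_def by (intro det_fun_cong) (simp add: len[simplified])
  qed
  define C where "C = (\<Prod>t<k. poly (odd_annihilator t) (real (2 * t + 1)))"
  define E where "E = (\<Sum>i<Suc k. i)"
  define F where "F = (\<Sum>t<k. 2 * t + 1)"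
  have "E \<le> F" unfolding E_def F_def by (induction k) auto
  have "monom 1 E * W = det (euler_matrix (Suc k) (\<lambda>i. monom 1 i) g)"
    using monom_mult_wronskian_det[of "Suc k" g]
    by (simp add: W E_def prod_monom del: sum.lessThan_Suc prod.lessThan_Suc)
  also have "\<dots> = euler_apply (odd_annihilator k) (g k) * det (euler_matrix k (\<lambda>i. monom 1 i) g)"
  proof (rule det_euler_matrix_Suc)
    show "euler_apply (odd_annihilator k) (g j) = 0" if "j < k" for j
      using euler_apply_odd_annihilator_hermite_He[of j k] g_odd[OF that] that by simp
  qed (simp_all add: degree_roots_poly coeff_roots_poly_top)
  also have "\<dots> = reduced_hermite k (n + k) * monom C F"
    using det_euler_matrix_odd_hermite[of k g] g_odd g_top
    by (simp add: reduced_hermite_def C_def F_def prod_monom)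
  also have "\<dots> = monom 1 E * (monom C (F - E) * reduced_hermite k (n + k))"
    using \<open>E \<le> F\<close> by (simp add: mult_monom mult.commute)
  finally have W_eq: "W = monom C (F - E) * reduced_hermite k (n + k)" by (simp add: monom_eq_0_iff)
  show ?thesis
  proof (rule that)
    have "C \<noteq> 0" unfolding C_def by (auto simp: poly_roots_poly prod_zero_iff)
    moreover have "vandermonde ds \<noteq> 0"
      by (rule vandermonde_nonzero) (use assms in \<open>auto simp: ds nth_append simp del: upt_Suc\<close>)
    ultimately show "C / vandermonde ds \<noteq> 0" by simp
    show "hermite_partition (n # rev [1..<k + 1]) = monom (C / vandermonde ds) (F - E) * reduced_hermite k (n + k)"
      unfolding hermite_partition_def ds_def[symmetric] W_def[symmetric] W_eq by (simp add: smult_monom_mult)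
  qed
qed

section \<open>Coefficients and positive roots of the reduced polynomial\<close>

lemma coeff_reduced_hermite:
  "coeff (reduced_hermite k N) m = poly (odd_annihilator k) (real m) * coeff (hermite_He N) m"
  by (simp add: reduced_hermite_def coeff_euler_apply)

lemma coeff_reduced_hermite_parity: "odd (N + m) \<Longrightarrow> coeff (reduced_hermite k N) m = 0"
  by (simp add: coeff_reduced_hermite coeff_hermite_He_parity)

lemma coeff_reduced_hermite_above: "N < m \<Longrightarrow> coeff (reduced_hermite k N) m = 0"
  by (simp add: coeff_reduced_hermite coeff_hermite_He_above)

lemma coeff_reduced_hermite_top: "2 * k \<le> N \<Longrightarrow> coeff (reduced_hermite k N) N \<noteq> 0"
  by (auto simp: coeff_reduced_hermite coeff_hermite_He_top poly_roots_poly prod_zero_iff)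

lemma reduced_hermite_nonzero: "2 * k \<le> N \<Longrightarrow> reduced_hermite k N \<noteq> 0"
  using coeff_reduced_hermite_top by force

lemma degree_reduced_hermite: "2 * k \<le> N \<Longrightarrow> degree (reduced_hermite k N) = N"
  by (intro antisym degree_le le_degree) (simp_all add: coeff_reduced_hermite_above coeff_reduced_hermite_top)

lemma coeff_reduced_hermite_low:
  assumes "odd N" "m < 2 * k + 1"
  shows "coeff (reduced_hermite k N) m = 0"
proof (cases "even m")
  case False
  then obtain t where "m = 2 * t + 1" using oddE by blast
  moreover have "t < k" using assms(2) \<open>m = 2 * t + 1\<close> by linarith
  ultimately have "poly (odd_annihilator k) (real m) = 0"
    unfolding poly_roots_poly by (intro prod_zero bexI[of _ t]) auto
  then show ?thesis by (simp add: coeff_reduced_hermite)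
qed (use assms(1) in \<open>simp add: coeff_reduced_hermite_parity\<close>)

lemma poly_odd_annihilator_shift:
  "poly (odd_annihilator k) (x + 2) * (x + 1 - 2 * real k) = (x + 1) * poly (odd_annihilator k) x"
  by (induction k) (simp_all add: poly_roots_poly algebra_simps)

lemma coeff_reduced_hermite_rec:
  "(real m + 2) * (real m + 1 - 2 * real k) * coeff (reduced_hermite k N) (m + 2)
     = (real m - real N) * coeff (reduced_hermite k N) m"
proof -
  have "(real m + 2) * (real m + 1 - 2 * real k) * coeff (reduced_hermite k N) (m + 2) =
      (real m + 2) * (poly (odd_annihilator k) (real m + 2) * (real m + 1 - 2 * real k)) * coeff (hermite_He N) (m + 2)"
    by (simp add: coeff_reduced_hermite algebra_simps)
  also have "\<dots> = poly (odd_annihilator k) (real m) * (real (m + 2) * real (m + 1) * coeff (hermite_He N) (m + 2))"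
    unfolding poly_odd_annihilator_shift by (simp add: algebra_simps)
  also have "\<dots> = (real m - real N) * coeff (reduced_hermite k N) m"
    unfolding coeff_hermite_He_rec by (simp add: coeff_reduced_hermite algebra_simps)
  finally show ?thesis .
qed

text \<open>The factors \<open>\<theta> - 1, \<theta> - 3, \<dots>, \<theta> - (2k - 1)\<close> are applied one at a time, each
  losing at most one positive root.\<close>
lemma card_pos_roots_reduced_hermite_ge:
  assumes "2 * k \<le> N"
  shows "N div 2 - k \<le> card {x. 0 < x \<and> poly (reduced_hermite k N) x = 0}"
proof -
  have "N div 2 - s \<le> card {x. 0 < x \<and> poly (reduced_hermite s N) x = 0}" if "s \<le> k" for s
    using that
  proof (induction s)
    case 0
    then show ?case using card_pos_roots_hermite_He[of N]
      by (simp add: reduced_hermite_def roots_poly_def euler_apply_1)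
  next
    case (Suc s)
    have shift: "reduced_hermite (Suc s) N = euler_shift (2 * s + 1) (reduced_hermite s N)"
      unfolding reduced_hermite_def roots_poly_Suc euler_apply_linear_factor[symmetric] by simp
    have "reduced_hermite s N \<noteq> 0" "reduced_hermite (Suc s) N \<noteq> 0"
      using Suc.prems assms by (auto intro!: reduced_hermite_nonzero)
    then show ?case
      using card_pos_roots_le_euler_shift[of "reduced_hermite s N" "2 * s + 1"] Suc shift by simp
  qed
  then show ?thesis by blast
qed

lemma poly_pos_if_coeffs_nonneg:
  fixes p :: "real poly"
  assumes "\<And>m. 0 \<le> coeff p m" "0 < coeff p 0" "0 \<le> x"
  shows "0 < poly p x"
proof -
  have "coeff p 0 * x ^ 0 \<le> (\<Sum>m\<le>degree p. coeff p m * x ^ m)"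
    by (rule member_le_sum) (use assms in auto)
  then show ?thesis using assms(2) by (simp add: poly_altdef)
qed

lemma euler_shift_sign_pattern:
  assumes "\<forall>s\<le>M. 0 < (-1) ^ (s - j) * \<sigma> * coeff p (2 * s)"
  shows "\<forall>s\<le>M. 0 < (-1) ^ (s - Suc j) * (- \<sigma>) * coeff (euler_shift (2 * j + 1) p) (2 * s)"
proof (intro allI impI)
  fix s assume "s \<le> M"
  then have pos: "0 < (-1) ^ (s - j) * \<sigma> * coeff p (2 * s)" using assms by blast
  show "0 < (-1) ^ (s - Suc j) * (- \<sigma>) * coeff (euler_shift (2 * j + 1) p) (2 * s)"
  proof (cases "s \<le> j")
    case True
    then have "(-1) ^ (s - Suc j) * (- \<sigma>) * coeff (euler_shift (2 * j + 1) p) (2 * s) =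
        (real (2 * j + 1) - real (2 * s)) * ((-1) ^ (s - j) * \<sigma> * coeff p (2 * s))"
      by (simp add: coeff_euler_shift algebra_simps)
    then show ?thesis using True pos by simp
  next
    case False
    then have "s - j = Suc (s - Suc j)" by simp
    then have "(-1) ^ (s - Suc j) * (- \<sigma>) * coeff (euler_shift (2 * j + 1) p) (2 * s) =
        (real (2 * s) - real (2 * j + 1)) * ((-1) ^ (s - j) * \<sigma> * coeff p (2 * s))"
      by (simp add: coeff_euler_shift algebra_simps)
    then show ?thesis using False pos by simp
  qed
qed

text \<open>A rule-of-signs bound for even polynomials: the even coefficients of \<open>p\<close> have one sign up
  to degree \<open>2j\<close> and alternate from there on, i.e.\ they show \<open>M - j\<close> sign changes. Each
  \<open>euler_shift (2j + 1)\<close> removes one sign change and at most one positive root.\<close>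
lemma card_pos_roots_le_sign_changes:
  fixes p :: "real poly"
  assumes "j \<le> M" "\<forall>s\<le>M. 0 < (-1) ^ (s - j) * \<sigma> * coeff p (2 * s)"
    and "\<forall>m. odd m \<longrightarrow> coeff p m = 0" "\<forall>m>2 * M. coeff p m = 0"
  shows "card {x. 0 < x \<and> poly p x = 0} \<le> M - j"
  using assms
proof (induction "M - j" arbitrary: j \<sigma> p)
  case 0
  have "0 \<le> coeff (Polynomial.smult \<sigma> p) m" for m
  proof (cases "odd m \<or> m > 2 * M")
    case False
    then obtain s where "m = 2 * s" "s \<le> M" by auto
    then show ?thesis using 0 less_imp_le[of 0] by force
  qed (use 0 in auto)
  moreover have "0 < coeff (Polynomial.smult \<sigma> p) 0" using 0 by force
  ultimately have "poly p x \<noteq> 0" if "0 < x" for x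
    using poly_pos_if_coeffs_nonneg[of "Polynomial.smult \<sigma> p" x] that by force
  then have "{x. 0 < x \<and> poly p x = 0} = {}" by blast
  then show ?case by (simp only: card.empty)
next
  case (Suc d)
  define p' where "p' = euler_shift (2 * j + 1) p"
  have signs: "\<forall>s\<le>M. 0 < (-1) ^ (s - Suc j) * (- \<sigma>) * coeff p' (2 * s)"
    unfolding p'_def using Suc.prems(2) by (rule euler_shift_sign_pattern)
  have "p \<noteq> 0" "p' \<noteq> 0" using Suc.prems(2) signs by (metis coeff_0 le0 mult_zero_right less_irrefl)+
  then have "card {x. 0 < x \<and> poly p x = 0} \<le> Suc (card {x. 0 < x \<and> poly p' x = 0})"
    unfolding p'_def by (rule card_pos_roots_le_euler_shift)
  moreover have "card {x. 0 < x \<and> poly p' x = 0} \<le> M - Suc j"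
    using Suc.hyps(1)[of "Suc j" "- \<sigma>" p'] Suc.hyps(2) signs Suc.prems(3,4)
    by (simp add: p'_def coeff_euler_shift)
  ultimately show ?case using Suc.hyps(2) by linarith
qed

lemma coeff_reduced_hermite_0: "even N \<Longrightarrow> coeff (reduced_hermite k N) 0 \<noteq> 0"
proof -
  assume "even N"
  then have "coeff (hermite_He N) 0 \<noteq> 0" using poly_hermite_He_0_eq_0_iff by (simp add: poly_0_coeff_0)
  moreover have "poly (odd_annihilator k) 0 \<noteq> 0" by (auto simp: poly_roots_poly prod_zero_iff)
  ultimately show ?thesis by (simp add: coeff_reduced_hermite)
qed

text \<open>By the recurrence the signs of \<open>q_0, q_2, q_4, \<dots>\<close> stay constant while \<open>2s + 1 < 2k\<close> and
  alternate afterwards.\<close>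
lemma coeff_reduced_hermite_signs:
  assumes "even N" "2 * k \<le> N"
  shows "\<forall>s\<le>N div 2. 0 < (-1) ^ (s - k) * coeff (reduced_hermite k N) 0 * coeff (reduced_hermite k N) (2 * s)"
proof (intro allI impI)
  define q where "q = coeff (reduced_hermite k N)"
  fix s assume "s \<le> N div 2"
  then show "0 < (-1) ^ (s - k) * q 0 * q (2 * s)"
  proof (induction s)
    case 0
    then show ?case using coeff_reduced_hermite_0[OF assms(1), of k]
      by (simp add: q_def) (metis not_real_square_gt_zero)
  next
    case (Suc s)
    define A where "A = (real (2 * s) + 2) * (real (2 * s) + 1 - 2 * real k)"
    define c where "c = (-1) ^ (s - k) * q 0"
    have rec: "A * q (2 * s + 2) = (real (2 * s) - real N) * q (2 * s)"
      unfolding A_def q_def by (rule coeff_reduced_hermite_rec)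
    have "A * (c * q (2 * s + 2)) = c * (A * q (2 * s + 2))" by (simp only: mult_ac)
    also have "\<dots> = (real (2 * s) - real N) * (c * q (2 * s))" unfolding rec by (simp only: mult_ac)
    finally have eq: "A * (c * q (2 * s + 2)) = (real (2 * s) - real N) * (c * q (2 * s))" .
    have "real (2 * s) - real N < 0" using Suc.prems assms(1) by auto
    moreover have "0 < c * q (2 * s)" unfolding c_def using Suc by simp
    ultimately have neg: "A * (c * q (2 * s + 2)) < 0" unfolding eq by (rule mult_neg_pos)
    show ?case
    proof (cases "s < k")
      case True
      then have "A < 0" unfolding A_def by (intro mult_pos_neg) auto
      then have "0 < c * q (2 * s + 2)" using neg by (simp add: mult_less_0_iff)
      then show ?thesis using True by (simp add: c_def)
    next
      case False
      then have "A > 0" unfolding A_def by (intro mult_pos_pos) auto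
      then have "c * q (2 * s + 2) < 0" using neg by (simp add: mult_less_0_iff)
      moreover have "Suc s - k = Suc (s - k)" using False by simp
      ultimately show ?thesis by (simp add: c_def)
    qed
  qed
qed

lemma card_pos_roots_reduced_hermite_even:
  assumes "even N" "2 * k \<le> N"
  shows "card {x. 0 < x \<and> poly (reduced_hermite k N) x = 0} = N div 2 - k"
proof (rule antisym)
  show "card {x. 0 < x \<and> poly (reduced_hermite k N) x = 0} \<le> N div 2 - k"
  proof (rule card_pos_roots_le_sign_changes)
    show "\<forall>m. odd m \<longrightarrow> coeff (reduced_hermite k N) m = 0"
      using assms(1) by (auto intro: coeff_reduced_hermite_parity)
    show "\<forall>m>2 * (N div 2). coeff (reduced_hermite k N) m = 0"
      using assms(1) by (auto intro: coeff_reduced_hermite_above)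
  qed (use assms coeff_reduced_hermite_signs in auto)
qed (rule card_pos_roots_reduced_hermite_ge[OF assms(2)])

section \<open>Simplicity of the non-zero roots\<close>

lemma ode_of_coeff_rec:
  fixes R :: "'a :: idom poly"
  assumes rec: "\<And>m. (of_nat m + 2) * (of_nat m + 1 - 2 * of_nat k) * coeff R (m + 2) = (of_nat m - of_nat N) * coeff R m"
    and "coeff R 1 = 0"
  shows "[:0, 1:] * pderiv (pderiv R) = [:2 * of_nat k, 0, 1:] * pderiv R + [:0, - of_nat N:] * R"
proof (rule poly_eqI)
  fix m
  show "coeff ([:0, 1:] * pderiv (pderiv R)) m = coeff ([:2 * of_nat k, 0, 1:] * pderiv R + [:0, - of_nat N:] * R) m"
  proof (cases m)
    case 0
    then show ?thesis using assms(2) by (simp add: coeff_pderiv mult_pCons_left)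
  next
    case (Suc t)
    then show ?thesis using rec[of t]
      by (cases t) (simp_all add: coeff_pderiv mult_pCons_left coeff_pCons algebra_simps numeral_2_eq_2)
  qed
qed

text \<open>At a multiple root \<open>z \<noteq> 0\<close> of order \<open>d\<close>, \<open>(x - z)^(d-1)\<close> divides the right-hand side but
  not \<open>x R''\<close>.\<close>
lemma order_eq_1_if_ode:
  fixes R :: "'a :: field_char_0 poly"
  assumes ode: "[:0, 1:] * pderiv (pderiv R) = A * pderiv R + B * R"
    and "2 \<le> degree R" "z \<noteq> 0" "poly R z = 0"
  shows "order z R = 1"
proof (rule ccontr)
  define d where "d = order z R"
  assume "order z R \<noteq> 1"
  have R0: "R \<noteq> 0" "pderiv R \<noteq> 0" "pderiv (pderiv R) \<noteq> 0"
    using assms(2) by (auto simp: pderiv_eq_0_iff degree_pderiv)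
  then have "d \<ge> 1" unfolding d_def using assms(4) by (simp add: order_root Suc_le_eq)
  then have "d \<ge> 2" using \<open>order z R \<noteq> 1\<close> unfolding d_def by simp
  have o1: "order z R = Suc (order z (pderiv R))" by (rule order_pderiv[OF R0(1) assms(4)])
  then have "poly (pderiv R) z = 0" using \<open>d \<ge> 2\<close> R0(2) unfolding d_def by (simp add: order_root)
  then have o2: "order z (pderiv R) = Suc (order z (pderiv (pderiv R)))" by (rule order_pderiv[OF R0(2)])
  have "[:-z, 1:] ^ (d - 1) dvd pderiv R" "[:-z, 1:] ^ (d - 1) dvd R"
    using o1 unfolding d_def by (simp_all add: order_divides)
  then have "[:-z, 1:] ^ (d - 1) dvd [:0, 1:] * pderiv (pderiv R)" unfolding ode by (intro dvd_add dvd_mult)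
  then have "d - 1 \<le> order z ([:0, 1:] * pderiv (pderiv R))" using R0(3) by (simp add: order_divides)
  also have "\<dots> = order z [:0, 1:] + order z (pderiv (pderiv R))"
    using R0(3) by (intro order_mult) simp
  also have "order z [:0, 1:] = 0" using assms(3) by (intro order_0I) simp
  finally show False using o1 o2 \<open>d \<ge> 2\<close> unfolding d_def by simp
qed

lemma nonzero_roots_reduced_hermite_simple:
  assumes "1 \<le> k" "2 * k \<le> N" "z \<noteq> 0" "poly (map_poly complex_of_real (reduced_hermite k N)) z = 0"
  shows "order z (map_poly complex_of_real (reduced_hermite k N)) = 1"
proof (rule order_eq_1_if_ode[OF ode_of_coeff_rec])
  fix m
  show "(of_nat m + 2) * (of_nat m + 1 - 2 * of_nat k) * coeff (map_poly complex_of_real (reduced_hermite k N)) (m + 2) =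
      (of_nat m - of_nat N) * coeff (map_poly complex_of_real (reduced_hermite k N)) m"
    using arg_cong[OF coeff_reduced_hermite_rec[of m k N], of complex_of_real] by (simp add: coeff_map_poly)
next
  have "poly (odd_annihilator k) 1 = 0"
    using assms(1) unfolding poly_roots_poly by (intro prod_zero bexI[of _ 0]) auto
  then show "coeff (map_poly complex_of_real (reduced_hermite k N)) 1 = 0"
    by (simp add: coeff_map_poly coeff_reduced_hermite)
  show "2 \<le> degree (map_poly complex_of_real (reduced_hermite k N))"
    using assms(1,2) by (subst degree_map_poly) (auto simp: degree_reduced_hermite)
qed (use assms in auto)

section \<open>Counting roots\<close>

lemma card_nonzero_roots_if_simple:
  fixes p :: "complex poly"
  assumes "p \<noteq> 0" and simple: "\<And>z. z \<noteq> 0 \<Longrightarrow> poly p z = 0 \<Longrightarrow> order z p = 1"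
  shows "card {z. z \<noteq> 0 \<and> poly p z = 0} = degree p - order 0 p"
proof -
  define Z where "Z = {z. poly p z = 0}"
  have "finite Z" unfolding Z_def using assms(1) by (rule poly_roots_finite)
  have "degree p = size (proots p)" by (simp add: size_proots_complex)
  also have "\<dots> = (\<Sum>z\<in>Z. order z p)"
    using assms(1) by (simp add: size_multiset_overloaded_eq Z_def)
  also have "\<dots> = order 0 p + (\<Sum>z\<in>Z - {0}. order z p)"
  proof (cases "0 \<in> Z")
    case False
    then have "order 0 p = 0" by (simp add: Z_def order_0I)
    then show ?thesis using False by simp
  qed (simp add: sum.remove[OF \<open>finite Z\<close>])
  also have "(\<Sum>z\<in>Z - {0}. order z p) = card (Z - {0})"
    using simple by (simp add: Z_def)
  finally show ?thesis by (simp add: Z_def set_diff_eq conj_commute)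
qed

lemma poly_map_poly_of_real: "poly (map_poly of_real p) (of_real x) = of_real (poly p x)"
  by (induction p) (auto simp: map_poly_pCons)

lemma poly_minus_if_coeff_parity:
  fixes p :: "'a :: comm_ring_1 poly"
  assumes "\<And>m. odd (N + m) \<Longrightarrow> coeff p m = 0"
  shows "poly p (- x) = (-1) ^ N * poly p x"
proof -
  have "coeff p m * (- x) ^ m = (-1) ^ N * (coeff p m * x ^ m)" for m
  proof (cases "even (N + m)")
    case True
    then have "(-1 :: 'a) ^ m = (-1) ^ N" by (metis even_add neg_one_even_power neg_one_odd_power)
    then show ?thesis by (simp add: power_minus[of x] mult_ac)
  qed (simp add: assms)
  then show ?thesis by (simp add: poly_altdef sum_distrib_left)
qed

lemma card_real_nonzero_roots:
  fixes Q :: "real poly"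
  assumes "Q \<noteq> 0" and sym: "\<And>x. poly Q (- x) = 0 \<longleftrightarrow> poly Q x = 0"
  shows "card {z. z \<in> \<real> \<and> z \<noteq> 0 \<and> poly (map_poly complex_of_real Q) z = 0} = 2 * card {x. 0 < x \<and> poly Q x = 0}"
proof -
  define S where "S = {x. 0 < x \<and> poly Q x = 0}"
  have "finite S" unfolding S_def using poly_roots_finite[OF assms(1)] by (rule rev_finite_subset) auto
  have "{z. z \<in> \<real> \<and> z \<noteq> 0 \<and> poly (map_poly complex_of_real Q) z = 0} = of_real ` (S \<union> uminus ` S)"
  proof (intro equalityI subsetI)
    fix z assume "z \<in> {z. z \<in> \<real> \<and> z \<noteq> 0 \<and> poly (map_poly complex_of_real Q) z = 0}"
    then have z: "z \<in> \<real>" "z \<noteq> 0" "poly (map_poly complex_of_real Q) z = 0" by auto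
    then obtain x where "z = of_real x" by (auto elim: Reals_cases)
    then have "x \<noteq> 0" "poly Q x = 0" using z by (simp_all add: poly_map_poly_of_real)
    moreover have "x \<in> S \<or> - x \<in> S" using calculation sym[of x] by (auto simp: S_def)
    ultimately show "z \<in> of_real ` (S \<union> uminus ` S)" using \<open>z = of_real x\<close> by force
  next
    fix z :: complex assume "z \<in> of_real ` (S \<union> uminus ` S)"
    then obtain x where "z = of_real x" "x \<in> S \<union> uminus ` S" by blast
    moreover have "x \<noteq> 0" "poly Q x = 0" using calculation(2) sym by (auto simp: S_def)
    ultimately show "z \<in> {z. z \<in> \<real> \<and> z \<noteq> 0 \<and> poly (map_poly complex_of_real Q) z = 0}"
      by (simp add: poly_map_poly_of_real)
  qed
  moreover have "card (S \<union> uminus ` S) = 2 * card S"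
    using \<open>finite S\<close> by (subst card_Un_disjoint) (auto simp: S_def card_image inj_on_def)
  ultimately show ?thesis unfolding S_def[symmetric] by (simp add: card_image inj_on_def)
qed

lemma poly_reduced_hermite_minus_eq_0_iff:
  "poly (reduced_hermite k N) (- x) = 0 \<longleftrightarrow> poly (reduced_hermite k N) x = 0"
  using poly_minus_if_coeff_parity[of N "reduced_hermite k N" x] coeff_reduced_hermite_parity by simp

lemma card_real_nonzero_roots_reduced_hermite:
  assumes "2 * k \<le> N"
  shows "card {z. z \<in> \<real> \<and> z \<noteq> 0 \<and> poly (map_poly complex_of_real (reduced_hermite k N)) z = 0} =
    2 * card {x. 0 < x \<and> poly (reduced_hermite k N) x = 0}"
  using reduced_hermite_nonzero[OF assms] poly_reduced_hermite_minus_eq_0_iff by (rule card_real_nonzero_roots)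

lemma finite_nonzero_roots:
  fixes p :: "'a :: idom poly"
  assumes "p \<noteq> 0"
  shows "finite {z. z \<noteq> 0 \<and> poly p z = 0}"
  using poly_roots_finite[OF assms] by (rule rev_finite_subset) auto

lemma map_poly_of_real_eq_0_iff: "map_poly (of_real :: real \<Rightarrow> 'a :: real_algebra_1) p = 0 \<longleftrightarrow> p = 0"
  by (auto simp: poly_eq_iff coeff_map_poly)

text \<open>For odd \<open>N\<close> the root at \<open>0\<close> has multiplicity at least \<open>2k + 1\<close>, so at most \<open>N - 2k - 1\<close>
  non-zero roots remain, and that many real ones have already been found.\<close>
lemma reduced_hermite_roots_odd:
  assumes "1 \<le> k" "2 * k \<le> N" "odd N"
  shows "(\<forall>z. poly (map_poly complex_of_real (reduced_hermite k N)) z = 0 \<longrightarrow> z \<in> \<real>)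
    \<and> card {z. z \<noteq> 0 \<and> poly (map_poly complex_of_real (reduced_hermite k N)) z = 0} = N - 2 * k - 1"
proof -
  define Qc where "Qc = map_poly complex_of_real (reduced_hermite k N)"
  define Z where "Z = {z. z \<noteq> 0 \<and> poly Qc z = 0}"
  define A where "A = {z. z \<in> \<real> \<and> z \<noteq> 0 \<and> poly Qc z = 0}"
  have Qc0: "Qc \<noteq> 0" and deg: "degree Qc = N"
    using reduced_hermite_nonzero[OF assms(2)] degree_reduced_hermite[OF assms(2)]
    by (simp_all add: Qc_def degree_map_poly map_poly_of_real_eq_0_iff)
  have "monom 1 (2 * k + 1) dvd Qc"
    unfolding monom_1_dvd_iff' using coeff_reduced_hermite_low[OF assms(3)] by (simp add: Qc_def coeff_map_poly)
  then have "2 * k + 1 \<le> order 0 Qc" using monom_1_dvd_iff[OF Qc0] by simp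
  then have "card Z \<le> N - (2 * k + 1)"
    using card_nonzero_roots_if_simple[OF Qc0] nonzero_roots_reduced_hermite_simple[OF assms(1,2)] deg
    unfolding Z_def Qc_def by simp
  moreover have "N - (2 * k + 1) \<le> card A"
    using card_real_nonzero_roots_reduced_hermite[OF assms(2)] card_pos_roots_reduced_hermite_ge[OF assms(2)]
      assms(3) unfolding A_def Qc_def by presburger
  moreover have "A \<subseteq> Z" "finite Z" unfolding A_def Z_def using finite_nonzero_roots[OF Qc0] by auto
  ultimately have "A = Z" "card Z = N - 2 * k - 1" using card_subset_eq[of Z A] card_mono[of Z A] by auto
  then show ?thesis unfolding A_def Z_def Qc_def by (metis (mono_tags, lifting) Reals_0 mem_Collect_eq)
qed

text \<open>For even \<open>N\<close> all \<open>N\<close> roots are simple and non-zero; the sign pattern leaves room for exactly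
  \<open>N - 2k\<close> real ones.\<close>
lemma reduced_hermite_roots_even:
  assumes "1 \<le> k" "2 * k \<le> N" "even N"
  shows "card {z. z \<noteq> 0 \<and> poly (map_poly complex_of_real (reduced_hermite k N)) z = 0 \<and> z \<in> \<real>} = N - 2 * k
    \<and> card {z. poly (map_poly complex_of_real (reduced_hermite k N)) z = 0 \<and> z \<notin> \<real>} = 2 * k"
proof -
  define Qc where "Qc = map_poly complex_of_real (reduced_hermite k N)"
  define Z where "Z = {z. z \<noteq> 0 \<and> poly Qc z = 0}"
  define A where "A = {z. z \<noteq> 0 \<and> poly Qc z = 0 \<and> z \<in> \<real>}"
  have Qc0: "Qc \<noteq> 0" and deg: "degree Qc = N"
    using reduced_hermite_nonzero[OF assms(2)] degree_reduced_hermite[OF assms(2)]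
    by (simp_all add: Qc_def degree_map_poly map_poly_of_real_eq_0_iff)
  have "poly Qc 0 \<noteq> 0"
    using coeff_reduced_hermite_0[OF assms(3), of k] by (simp add: Qc_def poly_0_coeff_0 coeff_map_poly)
  then have "order 0 Qc = 0" by (rule order_0I)
  then have "card Z = N"
    using card_nonzero_roots_if_simple[OF Qc0] nonzero_roots_reduced_hermite_simple[OF assms(1,2)] deg
    unfolding Z_def Qc_def by simp
  moreover have "card A = 2 * (N div 2 - k)"
    using card_real_nonzero_roots_reduced_hermite[OF assms(2)] card_pos_roots_reduced_hermite_even[OF assms(3,2)]
    unfolding A_def Qc_def by (simp add: conj_commute conj_left_commute)
  then have "card A = N - 2 * k" using assms(3) by presburger
  moreover have "A \<subseteq> Z" "finite Z" unfolding A_def Z_def using finite_nonzero_roots[OF Qc0] by auto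
  moreover have "{z. poly Qc z = 0 \<and> z \<notin> \<real>} = Z - A" unfolding A_def Z_def by auto
  ultimately show ?thesis using card_Diff_subset[of A Z] finite_subset[of A Z] assms(2)
    unfolding A_def Qc_def by auto
qed

lemma map_poly_of_real_monom_mult:
  "map_poly of_real (monom c e * p) = monom (of_real c) e * map_poly of_real p"
  by (rule poly_eqI) (simp add: coeff_map_poly coeff_monom_mult)

lemma order_monom_mult:
  fixes p :: "'a :: idom poly"
  assumes "c \<noteq> 0" "z \<noteq> 0" "p \<noteq> 0"
  shows "order z (monom c e * p) = order z p"
  using assms by (simp add: order_mult order_0I poly_monom)

theorem mainTheorem7:
  fixes n k :: nat
  assumes "1 \<le> k" and "k \<le> n"
  defines "P \<equiv> map_poly complex_of_real (hermite_partition (n # rev [1..<k+1]))"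
  shows "(odd (n - k) \<longrightarrow>
            (\<forall>z. poly P z = 0 \<longrightarrow> z \<in> \<real>)
          \<and> (\<forall>z. z \<noteq> 0 \<and> poly P z = 0 \<longrightarrow> order z P = 1)
          \<and> card {z. z \<noteq> 0 \<and> poly P z = 0} = n - k - 1)
       \<and> (even (n - k) \<longrightarrow>
            (\<forall>z. z \<noteq> 0 \<and> poly P z = 0 \<longrightarrow> order z P = 1)
          \<and> card {z. z \<noteq> 0 \<and> poly P z = 0 \<and> z \<in> \<real>} = n - k
          \<and> card {z. poly P z = 0 \<and> z \<notin> \<real>} = 2 * k)"
proof -
  obtain c e where "c \<noteq> 0" and hp: "hermite_partition (n # rev [1..<k + 1]) = monom c e * reduced_hermite k (n + k)"
    using hermite_partition_staircase[OF assms(2)] .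
  define Qc where "Qc = map_poly complex_of_real (reduced_hermite k (n + k))"
  have N: "2 * k \<le> n + k" "odd (n - k) \<longleftrightarrow> odd (n + k)" using assms(2) by presburger+
  have "Qc \<noteq> 0" using reduced_hermite_nonzero[OF N(1)] by (simp add: Qc_def map_poly_of_real_eq_0_iff)
  have P: "P = monom (of_real c) e * Qc" unfolding P_def hp Qc_def by (rule map_poly_of_real_monom_mult)
  have roots: "poly P z = 0 \<longleftrightarrow> poly Qc z = 0" if "z \<noteq> 0" for z
    using \<open>c \<noteq> 0\<close> that by (simp add: P poly_monom)
  have simple: "\<forall>z. z \<noteq> 0 \<and> poly P z = 0 \<longrightarrow> order z P = 1"
    using nonzero_roots_reduced_hermite_simple[OF assms(1) N(1)] order_monom_mult[of "of_real c" _ Qc e]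
      \<open>c \<noteq> 0\<close> \<open>Qc \<noteq> 0\<close> roots by (auto simp: P Qc_def)
  have odd: "(\<forall>z. poly P z = 0 \<longrightarrow> z \<in> \<real>) \<and> card {z. z \<noteq> 0 \<and> poly P z = 0} = n - k - 1"
    if "odd (n + k)"
  proof -
    have "{z. z \<noteq> 0 \<and> poly P z = 0} = {z. z \<noteq> 0 \<and> poly Qc z = 0}" using roots by blast
    moreover have "poly P z = 0 \<longrightarrow> z \<in> \<real>" for z
      using reduced_hermite_roots_odd[OF assms(1) N(1) that] roots[of z] by (cases "z = 0") (auto simp: Qc_def)
    ultimately show ?thesis using reduced_hermite_roots_odd[OF assms(1) N(1) that] by (simp add: Qc_def)
  qed
  have even: "card {z. z \<noteq> 0 \<and> poly P z = 0 \<and> z \<in> \<real>} = n - k \<and> card {z. poly P z = 0 \<and> z \<notin> \<real>} = 2 * k"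
    if "even (n + k)"
  proof -
    have "{z. z \<noteq> 0 \<and> poly P z = 0 \<and> z \<in> \<real>} = {z. z \<noteq> 0 \<and> poly Qc z = 0 \<and> z \<in> \<real>}"
      using roots by blast
    moreover have "{z. poly P z = 0 \<and> z \<notin> \<real>} = {z. poly Qc z = 0 \<and> z \<notin> \<real>}"
      using roots Reals_0 by (metis (lifting))
    ultimately show ?thesis using reduced_hermite_roots_even[OF assms(1) N(1) that] by (simp add: Qc_def)
  qed
  show ?thesis using simple odd even N(2) by blast
qed

end
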